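(* Let $(R,+,0,\times,1,\leq)$ be a partially ordered unitary (nonassociative) ring. For $x \in R$ define $x^{\to 0} = 1$ and $x^{\to n+1} = x\, x^{\to n}$. Suppose that: (1) $1 \geq 0$; (2) $R$ is monotone $\sigma$-complete; (3) every $x \in\, ]0,1]$ has a right-sup-almost-inverse; (4) for every $x \in [0,1[$, $\inf_{n \in \mathbb{N}} x^{\to n}$ exists and equals $0$. Then: (a) for every $x \in [0,1[$, the supremum $\sum_{n\in\mathbb{N}} x^{\to n} := \sup_{n \in \mathbb{N}} \sum_{k=0}^n x^{\to k}$ exists; (b) for every $x \in [0,1[$, $x \sum_{n\in\mathbb{N}} x^{\to n} = \sup_{n\in\mathbb{N}} \sum_{k=0}^{n} x^{\to k+1}$ (and this supremum exists); (c) every $x \in\, ]0,1]$ admits a right inverse, namely $x_R^{-1} = \sum_{n \in \mathbb{N}} (1-x)^{\to n}$, i.e. $x\, x_R^{-1} = 1$; moreover $x_R^{-1} = 1 + a \geq 1$ where $a := \sup_{n}\sum_{k=0}^{n}(1-x)^{\to k+1} \geq 0$.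
   Context: Rings are not assumed associative or commutative: a ring is an abelian group $(R,+,0)$ with a biadditive multiplication; unitary means there is a two-sided multiplicative unit $1$. A partially ordered ring is a ring with a partial order $\leq$ such that $y \geq z \Rightarrow x+y \geq x+z$ and $x \geq 0, y \geq 0 \Rightarrow xy \geq 0$. Write $x < y$ for $x \le y$, $x \ne y$; $]0,1] = \{x : 0 < x \leq 1\}$, $[0,1[ = \{x : 0 \le x < 1\}$. A poset is monotone $\sigma$-complete if every increasing sequence that is bounded above has a supremum. An element $x > 0$ has a right-sup-almost-inverse if there is $y > 0$ with $xy \geq 1$. *)

theory Defs
  imports Main
begin

class po_nonassoc_ring_1 = ordered_ab_group_add + times + one +
  assumes nr_distrib_left: "a * (b + c) = a * b + a * c"
    and nr_distrib_right: "(a + b) * c = a * c + b * c"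
    and nr_mult_1_left: "1 * a = a"
    and nr_mult_1_right: "a * 1 = a"
    and nr_mult_nonneg: "0 \<le> a \<Longrightarrow> 0 \<le> b \<Longrightarrow> 0 \<le> a * b"

primrec rpow :: "'a::{times,one} \<Rightarrow> nat \<Rightarrow> 'a" where
  "rpow x 0 = 1"
| "rpow x (Suc n) = x * rpow x n"

definition is_sup :: "'a::order set \<Rightarrow> 'a \<Rightarrow> bool" where
  "is_sup S s \<longleftrightarrow> (\<forall>y\<in>S. y \<le> s) \<and> (\<forall>u. (\<forall>y\<in>S. y \<le> u) \<longrightarrow> s \<le> u)"

definition is_inf :: "'a::order set \<Rightarrow> 'a \<Rightarrow> bool" where
  "is_inf S s \<longleftrightarrow> (\<forall>y\<in>S. s \<le> y) \<and> (\<forall>u. (\<forall>y\<in>S. u \<le> y) \<longrightarrow> u \<le> s)"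

definition monotone_sigma_complete :: "'a::order itself \<Rightarrow> bool" where
  "monotone_sigma_complete _ \<longleftrightarrow>
     (\<forall>f::nat \<Rightarrow> 'a. mono f \<and> (\<exists>b. \<forall>n. f n \<le> b) \<longrightarrow> (\<exists>s. is_sup (range f) s))"

definition has_right_sup_almost_inverse :: "'a::{times,one,order,zero} \<Rightarrow> bool" where
  "has_right_sup_almost_inverse x \<longleftrightarrow> (\<exists>y. 0 < y \<and> 1 \<le> x * y)"

definition rseries :: "'a::{times,one,order,comm_monoid_add} \<Rightarrow> 'a" where
  "rseries x = (THE s. is_sup (range (\<lambda>n. \<Sum>k\<le>n. rpow x k)) s)"

end

theory Submission
  imports Defs
begin

text \<open>Write \<open>s\<^sub>n = \<Sum>\<^sub>k\<^sub>\<le>\<^sub>n x\<^sup>\<rightarrow>\<^sup>k\<close>, so that \<open>s\<^sub>n\<^sub>+\<^sub>1 = 1 + x s\<^sub>n\<close> by distributivity alone (no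
  associativity is needed). For \<open>0 \<le> x < 1\<close>, a right-sup-almost-inverse \<open>y\<close> of \<open>1 - x\<close>
  satisfies \<open>1 + x y \<le> y\<close>, hence bounds every \<open>s\<^sub>n\<close>, and \<sigma>-completeness gives
  \<open>S = sup\<^sub>n s\<^sub>n\<close>. Comparing \<open>S\<close> with \<open>1 + x S\<close> in both directions, using only monotonicity
  of left multiplication by \<open>x\<close> and by \<open>1 - x\<close>, yields \<open>x S = S - 1\<close>, and in the same way
  \<open>x S = sup\<^sub>n x s\<^sub>n\<close>. Replacing \<open>x\<close> by \<open>1 - x\<close> turns \<open>(1 - x) S = S - 1\<close> into \<open>x S = 1\<close>.\<close>

context po_nonassoc_ring_1
begin

declare nr_mult_1_left [simp] nr_mult_1_right [simp]

lemma nr_right_diff_distrib: "a * (b - c) = a * b - a * c"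
  by (metis diff_add_cancel eq_diff_eq nr_distrib_left)

lemma nr_left_diff_distrib: "(a - b) * c = a * c - b * c"
  by (metis diff_add_cancel eq_diff_eq nr_distrib_right)

lemma nr_mult_left_mono: "0 \<le> a \<Longrightarrow> b \<le> c \<Longrightarrow> a * b \<le> a * c"
  using nr_mult_nonneg[of a "c - b"] by (simp add: nr_right_diff_distrib)

lemma nr_sum_distrib_left: "a * (\<Sum>k\<le>(n::nat). f k) = (\<Sum>k\<le>n. a * f k)"
  by (induction n) (simp_all add: nr_distrib_left)

end

lemma rpow_nonneg:
  fixes x :: "'a::po_nonassoc_ring_1"
  shows "(0::'a) \<le> 1 \<Longrightarrow> 0 \<le> x \<Longrightarrow> 0 \<le> rpow x n"
  by (induction n) (simp_all add: nr_mult_nonneg)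

lemma rpow_partial_sum_Suc:
  fixes x :: "'a::po_nonassoc_ring_1"
  shows "(\<Sum>k\<le>Suc n. rpow x k) = 1 + x * (\<Sum>k\<le>n. rpow x k)"
  by (simp only: sum.atMost_Suc_shift rpow.simps nr_sum_distrib_left)

lemma rpow_shifted_partial_sum:
  fixes x :: "'a::po_nonassoc_ring_1"
  shows "(\<Sum>k\<le>n. rpow x (Suc k)) = x * (\<Sum>k\<le>n. rpow x k)"
  by (simp add: nr_sum_distrib_left)

lemma rpow_partial_sums_mono:
  fixes x :: "'a::po_nonassoc_ring_1"
  assumes "(0::'a) \<le> 1" "0 \<le> x"
  shows "mono (\<lambda>n. \<Sum>k\<le>n. rpow x k)"
  unfolding mono_iff_le_Suc using assms by (simp add: rpow_nonneg nr_mult_nonneg)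

lemma rpow_partial_sums_le:
  fixes x :: "'a::po_nonassoc_ring_1"
  assumes "0 \<le> x" "0 \<le> x * y" "1 + x * y \<le> y"
  shows "(\<Sum>k\<le>n. rpow x k) \<le> y"
proof (induction n)
  case 0
  have "1 \<le> 1 + x * y" using assms(2) by simp
  then have "1 \<le> y" using assms(3) by (rule order.trans)
  then show ?case by simp
next
  case (Suc n)
  then have "1 + x * (\<Sum>k\<le>n. rpow x k) \<le> 1 + x * y"
    using assms(1) by (simp add: nr_mult_left_mono)
  then have "1 + x * (\<Sum>k\<le>n. rpow x k) \<le> y" using assms(3) by (rule order.trans)
  then show ?case by (simp del: sum.atMost_Suc add: rpow_partial_sum_Suc)
qed

lemma is_sup_range_upper: "is_sup (range f) s \<Longrightarrow> f n \<le> s"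
  unfolding is_sup_def by auto

lemma is_sup_range_least: "is_sup (range f) s \<Longrightarrow> (\<And>n. f n \<le> u) \<Longrightarrow> s \<le> u"
  unfolding is_sup_def by auto

lemma is_sup_unique: "is_sup S a \<Longrightarrow> is_sup S b \<Longrightarrow> a = b"
  unfolding is_sup_def by (meson order.antisym)

lemma rseries_eqI: "is_sup (range (\<lambda>n. \<Sum>k\<le>n. rpow x k)) s \<Longrightarrow> rseries x = s"
  unfolding rseries_def by (rule the_equality) (auto intro: is_sup_unique)

lemma rpow_partial_sums_sup_ge_one:
  fixes x :: "'a::po_nonassoc_ring_1"
  assumes "is_sup (range (\<lambda>n. \<Sum>k\<le>n. rpow x k)) S"
  shows "1 \<le> S"
  using is_sup_range_upper[OF assms, of 0] by simp

lemma rpow_partial_sums_has_sup: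
  fixes x :: "'a::po_nonassoc_ring_1"
  assumes "(0::'a) \<le> 1" "monotone_sigma_complete TYPE('a)"
    and "has_right_sup_almost_inverse (1 - x)" "0 \<le> x"
  shows "\<exists>S. is_sup (range (\<lambda>n. \<Sum>k\<le>n. rpow x k)) S"
proof -
  obtain y where y: "0 < y" "1 \<le> (1 - x) * y"
    using assms(3) unfolding has_right_sup_almost_inverse_def by blast
  have "1 + x * y \<le> y"
    using y(2) by (simp add: nr_left_diff_distrib le_diff_eq add.commute)
  moreover have "0 \<le> x * y" using assms(4) y(1) by (simp add: nr_mult_nonneg)
  ultimately have "\<forall>n. (\<Sum>k\<le>n. rpow x k) \<le> y"
    using assms(4) rpow_partial_sums_le by blast
  then show ?thesis
    using assms(2) rpow_partial_sums_mono[OF assms(1,4)]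
    unfolding monotone_sigma_complete_def by blast
qed

lemma rpow_partial_sums_sup_fixpoint:
  fixes x :: "'a::po_nonassoc_ring_1"
  assumes "0 \<le> x" "x \<le> 1"
    and sup: "is_sup (range (\<lambda>n. \<Sum>k\<le>n. rpow x k)) S"
  shows "x * S = S - 1"
proof (rule order.antisym)
  define s where "s n = (\<Sum>k\<le>n. rpow x k)" for n
  have sS: "s n \<le> S" for n using is_sup_range_upper[OF sup] by (simp add: s_def)
  \<comment> \<open>\<open>x S - S + 1 \<le> S - s\<^sub>n\<close> combines \<open>(1 - x)(S - s\<^sub>n) \<ge> 0\<close> with \<open>s\<^sub>n\<^sub>+\<^sub>1 = 1 + x s\<^sub>n \<le> S\<close>.\<close>
  have gap: "x * S - S + 1 \<le> S - s n" for n
  proof -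
    have "0 \<le> (1 - x) * (S - s n)"
      using assms(2) sS[of n] by (simp add: nr_mult_nonneg)
    then have "x * S - x * s n \<le> S - s n"
      by (simp add: nr_left_diff_distrib nr_right_diff_distrib algebra_simps)
    moreover have "x * s n \<le> S - 1"
      using sS[of "Suc n"] unfolding s_def rpow_partial_sum_Suc by (simp add: le_diff_eq add.commute)
    ultimately have "x * S - x * s n + x * s n \<le> S - s n + (S - 1)"
      by (rule add_mono)
    then show ?thesis by (simp add: algebra_simps)
  qed
  have "S \<le> S - (x * S - S + 1)"
    by (rule is_sup_range_least[OF sup]) (use gap in \<open>simp add: s_def algebra_simps\<close>)
  then show "x * S \<le> S - 1" by (simp add: algebra_simps)
next
  have "(\<Sum>k\<le>n. rpow x k) \<le> x * S + 1" for n
  proof (cases n)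
    case 0
    have "0 \<le> x * S"
      using assms(1,2) rpow_partial_sums_sup_ge_one[OF sup] by (simp add: nr_mult_nonneg)
    then show ?thesis using 0 by simp
  next
    case (Suc m)
    have "x * (\<Sum>k\<le>m. rpow x k) \<le> x * S"
      using assms(1) is_sup_range_upper[OF sup] by (simp add: nr_mult_left_mono)
    then show ?thesis using Suc by (simp del: sum.atMost_Suc add: rpow_partial_sum_Suc add.commute)
  qed
  then have "S \<le> x * S + 1" by (rule is_sup_range_least[OF sup])
  then show "S - 1 \<le> x * S" by (simp add: algebra_simps)
qed

lemma rpow_shifted_partial_sums_is_sup:
  fixes x :: "'a::po_nonassoc_ring_1"
  assumes "0 \<le> x" "x \<le> 1"
    and sup: "is_sup (range (\<lambda>n. \<Sum>k\<le>n. rpow x k)) S"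
  shows "is_sup (range (\<lambda>n. \<Sum>k\<le>n. rpow x (Suc k))) (x * S)"
  unfolding is_sup_def rpow_shifted_partial_sum
proof (intro conjI ballI allI impI)
  fix z assume "z \<in> range (\<lambda>n. x * (\<Sum>k\<le>n. rpow x k))"
  then show "z \<le> x * S"
    using assms(1) is_sup_range_upper[OF sup] by (auto simp: nr_mult_left_mono)
next
  fix u assume bound: "\<forall>z\<in>range (\<lambda>n. x * (\<Sum>k\<le>n. rpow x k)). z \<le> u"
  have "(\<Sum>k\<le>n. rpow x k) \<le> u + 1" for n
  proof (cases n)
    case 0
    have "x * (\<Sum>k\<le>0. rpow x k) \<le> u" using bound by blast
    then show ?thesis using 0 assms(1) by simp
  next
    case (Suc m)
    have "x * (\<Sum>k\<le>m. rpow x k) \<le> u" using bound by blast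
    then show ?thesis using Suc by (simp del: sum.atMost_Suc add: rpow_partial_sum_Suc add.commute)
  qed
  then have "S \<le> u + 1" by (rule is_sup_range_least[OF sup])
  then show "x * S \<le> u" by (simp add: rpow_partial_sums_sup_fixpoint[OF assms] diff_le_eq)
qed

lemma complement_partial_sums_sup_right_inverse:
  fixes x :: "'a::po_nonassoc_ring_1"
  assumes "0 \<le> x" "x \<le> 1"
    and "is_sup (range (\<lambda>n. \<Sum>k\<le>n. rpow (1 - x) k)) S"
  shows "x * S = 1"
proof -
  have "S - x * S = S - 1"
    using rpow_partial_sums_sup_fixpoint[OF _ _ assms(3)] assms(1,2) by (simp add: nr_left_diff_distrib)
  then show ?thesis by simp
qed

theorem mainTheorem11:
  fixes R :: "'a::po_nonassoc_ring_1 itself"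
  assumes h1: "(0::'a) \<le> 1"
    and h2: "monotone_sigma_complete TYPE('a)"
    and h3: "\<forall>x::'a. 0 < x \<and> x \<le> 1 \<longrightarrow> has_right_sup_almost_inverse x"
    and h4: "\<forall>x::'a. 0 \<le> x \<and> x < 1 \<longrightarrow> is_inf (range (rpow x)) 0"
  shows "(\<forall>x::'a. 0 \<le> x \<and> x < 1 \<longrightarrow>
            (\<exists>s. is_sup (range (\<lambda>n. \<Sum>k\<le>n. rpow x k)) s))
       \<and> (\<forall>x::'a. 0 \<le> x \<and> x < 1 \<longrightarrow>
            is_sup (range (\<lambda>n. \<Sum>k\<le>n. rpow x (Suc k))) (x * rseries x))
       \<and> (\<forall>x::'a. 0 < x \<and> x \<le> 1 \<longrightarrow>
            is_sup (range (\<lambda>n. \<Sum>k\<le>n. rpow (1 - x) k)) (rseries (1 - x))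
          \<and> x * rseries (1 - x) = 1
          \<and> (\<exists>a. is_sup (range (\<lambda>n. \<Sum>k\<le>n. rpow (1 - x) (Suc k))) a
                 \<and> 0 \<le> a \<and> rseries (1 - x) = 1 + a)
          \<and> 1 \<le> rseries (1 - x))"
proof -
  have sup: "is_sup (range (\<lambda>n. \<Sum>k\<le>n. rpow x k)) (rseries x)"
    if x0: "0 \<le> x" and x1: "x < 1" for x :: 'a
  proof -
    have "has_right_sup_almost_inverse (1 - x)" using h3 x0 x1 by simp
    then obtain S where "is_sup (range (\<lambda>n. \<Sum>k\<le>n. rpow x k)) S"
      using rpow_partial_sums_has_sup[OF h1 h2 _ x0] by blast
    then show ?thesis using rseries_eqI by metis
  qed
  show ?thesis
  proof (intro conjI allI impI)
    fix x :: 'a assume x: "0 \<le> x \<and> x < 1"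
    with sup show "\<exists>s. is_sup (range (\<lambda>n. \<Sum>k\<le>n. rpow x k)) s" by blast
    show "is_sup (range (\<lambda>n. \<Sum>k\<le>n. rpow x (Suc k))) (x * rseries x)"
      using x by (intro rpow_shifted_partial_sums_is_sup sup) (simp_all add: less_imp_le)
  next
    fix x :: 'a assume x: "0 < x \<and> x \<le> 1"
    then have "0 \<le> 1 - x" "1 - x < 1" "0 \<le> x" "x \<le> 1" by (simp_all add: less_imp_le)
    note S = sup[OF \<open>0 \<le> 1 - x\<close> \<open>1 - x < 1\<close>]
    then show "is_sup (range (\<lambda>n. \<Sum>k\<le>n. rpow (1 - x) k)) (rseries (1 - x))" .
    show "x * rseries (1 - x) = 1"
      using complement_partial_sums_sup_right_inverse[OF \<open>0 \<le> x\<close> \<open>x \<le> 1\<close> S] .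
    show "1 \<le> rseries (1 - x)" using rpow_partial_sums_sup_ge_one[OF S] .
    show "\<exists>a. is_sup (range (\<lambda>n. \<Sum>k\<le>n. rpow (1 - x) (Suc k))) a
            \<and> 0 \<le> a \<and> rseries (1 - x) = 1 + a"
    proof (intro exI conjI)
      show "is_sup (range (\<lambda>n. \<Sum>k\<le>n. rpow (1 - x) (Suc k))) ((1 - x) * rseries (1 - x))"
        using rpow_shifted_partial_sums_is_sup[OF \<open>0 \<le> 1 - x\<close> _ S] \<open>1 - x < 1\<close> by simp
      show "0 \<le> (1 - x) * rseries (1 - x)"
        using \<open>0 \<le> 1 - x\<close> rpow_partial_sums_sup_ge_one[OF S] h1 by (simp add: nr_mult_nonneg)
      show "rseries (1 - x) = 1 + (1 - x) * rseries (1 - x)"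
        using rpow_partial_sums_sup_fixpoint[OF \<open>0 \<le> 1 - x\<close> _ S] \<open>1 - x < 1\<close> by simp
    qed
  qed
qed

end
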